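(* Let $A$ and $B$ be disjoint cubic graphs with $v(A)\equiv 0\pmod 6$ and $v(B)\equiv 0\pmod 6$, let $a=a_1a_2\in E(A)$ and $b=b_1b_2\in E(B)$. Suppose $A$ has no $\Lambda$-factor containing $a$, and $B$ has no $\Lambda$-factor avoiding $b$. Let $G=AabB$. Then $v(G)\equiv 0\pmod 6$ and $G$ has no $\Lambda$-factor.
   Context: Graphs are finite, undirected, without loops or multiple edges; $v(G)=|V(G)|$. For disjoint graphs $A,B$ with $a=a_1a_2\in E(A)$, $b=b_1b_2\in E(B)$, $AabB$ is obtained from $(A-a)\cup(B-b)$ (edge deletions) by adding the new edges $a_1b_1$ and $a_2b_2$. A $\Lambda$-factor of a graph is a spanning subgraph each of whose components is a path on 3 vertices; it contains (avoids) an edge $e$ if $e$ is (is not) one of its edges. *)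

theory Defs
  imports Main
begin

definition simple_graph :: "'a set \<Rightarrow> 'a set set \<Rightarrow> bool" where
  "simple_graph V E \<longleftrightarrow> finite V \<and>
     (\<forall>e\<in>E. \<exists>u w. u \<noteq> w \<and> u \<in> V \<and> w \<in> V \<and> e = {u, w})"

definition degree :: "'a set set \<Rightarrow> 'a \<Rightarrow> nat" where
  "degree E v = card {e \<in> E. v \<in> e}"

definition cubic :: "'a set \<Rightarrow> 'a set set \<Rightarrow> bool" where
  "cubic V E \<longleftrightarrow> simple_graph V E \<and> (\<forall>v\<in>V. degree E v = 3)"

definition join_verts :: "'a set \<Rightarrow> 'a set \<Rightarrow> 'a set" where
  "join_verts VA VB = VA \<union> VB"

definition join_edges :: "'a set set \<Rightarrow> 'a \<Rightarrow> 'a \<Rightarrow> 'a set set \<Rightarrow> 'a \<Rightarrow> 'a \<Rightarrow> 'a set set" where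
  "join_edges EA a1 a2 EB b1 b2 =
     (EA - {{a1, a2}}) \<union> (EB - {{b1, b2}}) \<union> {{a1, b1}, {a2, b2}}"

definition adjrel :: "'a set set \<Rightarrow> ('a \<times> 'a) set" where
  "adjrel F = {(u, w). {u, w} \<in> F}"

definition component :: "'a set set \<Rightarrow> 'a \<Rightarrow> 'a set" where
  "component F v = {w. (v, w) \<in> (adjrel F)\<^sup>*}"

definition is_path3 :: "'a set set \<Rightarrow> 'a set \<Rightarrow> bool" where
  "is_path3 F S \<longleftrightarrow> (\<exists>x y z. x \<noteq> y \<and> y \<noteq> z \<and> x \<noteq> z \<and> S = {x, y, z} \<and>
       {e \<in> F. e \<subseteq> S} = {{x, y}, {y, z}})"

definition lambda_factor :: "'a set \<Rightarrow> 'a set set \<Rightarrow> 'a set set \<Rightarrow> bool" where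
  "lambda_factor V E F \<longleftrightarrow> F \<subseteq> E \<and> (\<forall>v\<in>V. is_path3 F (component F v))"

end

(*
  Let F be a \<Lambda>-factor of AabB. Only the edges a1b1 and a2b2 join the two sides, so every
  component of F containing neither a1 nor a2 lies inside A or inside B. As 3 divides v(A), the
  components of a1 and a2 together meet A in a multiple of three vertices, while each of them meets
  A in one to three vertices. If both lie inside A, the edges of F inside B form a \<Lambda>-factor of B
  avoiding b. Otherwise one of them meets A only in a1 (say) and the other in a2 and one further
  vertex x; keeping F on the rest of A and adding the path a1 a2 x gives a \<Lambda>-factor of A
  containing a.
*)

theory Submission
  imports Defs
begin

section \<open>Components of an edge set\<close>

definition edge_closed :: "'a set set \<Rightarrow> 'a set \<Rightarrow> bool" where
  "edge_closed F S \<longleftrightarrow> (\<forall>e\<in>F. e \<inter> S \<noteq> {} \<longrightarrow> e \<subseteq> S)"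

lemma sym_adjrel: "sym (adjrel F)"
  by (auto simp: sym_def adjrel_def insert_commute)

lemma in_component_self: "v \<in> component F v"
  by (simp add: component_def)

lemma mem_component_if_edge: "{u, w} \<in> F \<Longrightarrow> w \<in> component F u"
  by (simp add: component_def adjrel_def r_into_rtrancl)

lemma component_eq:
  assumes "w \<in> component F v"
  shows "component F w = component F v"
proof -
  have vw: "(v, w) \<in> (adjrel F)\<^sup>*" using assms by (simp add: component_def)
  have wv: "(w, v) \<in> (adjrel F)\<^sup>*" using symD[OF sym_rtrancl[OF sym_adjrel] vw] .
  show ?thesis
    unfolding component_def using rtrancl_trans[OF vw] rtrancl_trans[OF wv] by blast
qed

lemma component_disjoint:
  "component F v \<noteq> component F w \<Longrightarrow> component F v \<inter> component F w = {}"
  by (metis component_eq disjoint_iff)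

lemma component_subset:
  assumes "v \<in> U" and "\<And>u w. u \<in> U \<Longrightarrow> u \<in> component F v \<Longrightarrow> {u, w} \<in> F \<Longrightarrow> w \<in> U"
  shows "component F v \<subseteq> U"
proof
  fix w assume "w \<in> component F v"
  then have "(v, w) \<in> (adjrel F)\<^sup>*" by (simp add: component_def)
  then show "w \<in> U"
  proof (induction rule: rtrancl_induct)
    case base
    show ?case using assms(1) .
  next
    case (step u w)
    then show ?case using assms(2) by (auto simp: adjrel_def component_def)
  qed
qed

lemma edge_closed_component:
  assumes "\<forall>e\<in>F. \<exists>u w. e = {u, w}"
  shows "edge_closed F (component F v)"
  unfolding edge_closed_def
proof (intro ballI impI)
  fix e assume "e \<in> F" and meets: "e \<inter> component F v \<noteq> {}"
  then obtain u w where e: "e = {u, w}" using assms by blast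
  with \<open>e \<in> F\<close> have "(u, w) \<in> adjrel F" "(w, u) \<in> adjrel F"
    by (simp_all add: adjrel_def insert_commute)
  then show "e \<subseteq> component F v"
    using meets unfolding e component_def by (auto intro: rtrancl_into_rtrancl)
qed

lemma component_eq_if_path3:
  assumes path: "is_path3 F S" and "v \<in> S" and closed: "edge_closed F S"
  shows "component F v = S"
proof
  show "component F v \<subseteq> S"
    using \<open>v \<in> S\<close> closed by (intro component_subset) (auto simp: edge_closed_def)
next
  obtain x y z where S: "S = {x, y, z}" and "{y, x} \<in> F" "{y, z} \<in> F"
    using path unfolding is_path3_def by (auto simp: insert_commute)
  then have "S \<subseteq> component F y"
    using in_component_self mem_component_if_edge by fastforce
  with \<open>v \<in> S\<close> have "component F v = component F y"
    by (intro component_eq) blast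
  with \<open>S \<subseteq> component F y\<close> show "S \<subseteq> component F v" by simp
qed

section \<open>\<Lambda>-factors\<close>

lemma lambda_factorI:
  assumes "F \<subseteq> E" and "\<And>v. v \<in> V \<Longrightarrow> \<exists>S. v \<in> S \<and> is_path3 F S \<and> edge_closed F S"
  shows "lambda_factor V E F"
  using assms component_eq_if_path3 unfolding lambda_factor_def by metis

lemma is_path3_card: "is_path3 F S \<Longrightarrow> card S = 3"
  unfolding is_path3_def by (elim exE conjE) simp

lemma is_path3_cong: "is_path3 F S \<Longrightarrow> {e \<in> F'. e \<subseteq> S} = {e \<in> F. e \<subseteq> S} \<Longrightarrow> is_path3 F' S"
  by (simp add: is_path3_def)

lemma is_path3_edge:
  assumes "is_path3 F S" and "u \<in> S"
  shows "\<exists>w\<in>S. w \<noteq> u \<and> {u, w} \<in> F"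
proof -
  obtain x y z where "x \<noteq> y" "y \<noteq> z" "S = {x, y, z}" "{x, y} \<in> F" "{y, z} \<in> F"
    using assms(1) unfolding is_path3_def by blast
  then show ?thesis
    using assms(2) by (metis insert_commute insertCI insertE singletonD)
qed

lemma simple_graph_edgeD:
  "simple_graph V E \<Longrightarrow> e \<in> E \<Longrightarrow> \<exists>u w. u \<noteq> w \<and> u \<in> V \<and> w \<in> V \<and> e = {u, w}"
  unfolding simple_graph_def by blast

lemma lambda_factor_component:
  assumes factor: "lambda_factor V E F" and G: "simple_graph V E" and "v \<in> V"
  shows "is_path3 F (component F v)" and "edge_closed F (component F v)"
    and "card (component F v) = 3"
proof -
  show "is_path3 F (component F v)"
    using factor \<open>v \<in> V\<close> by (simp add: lambda_factor_def)
  then show "card (component F v) = 3" by (rule is_path3_card)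
  have "F \<subseteq> E" using factor by (simp add: lambda_factor_def)
  then show "edge_closed F (component F v)"
    using simple_graph_edgeD[OF G] by (intro edge_closed_component) blast
qed

lemma three_dvd_card_union_of_components:
  assumes factor: "lambda_factor V E F" and G: "simple_graph V E"
    and W: "W \<subseteq> V" "\<And>v. v \<in> W \<Longrightarrow> component F v \<subseteq> W"
  shows "3 dvd card W"
proof -
  have "finite V" using G by (simp add: simple_graph_def)
  with W(1) have "finite W" by (rule finite_subset)
  have union: "\<Union> (component F ` W) = W"
  proof
    show "\<Union> (component F ` W) \<subseteq> W" using W(2) by blast
    show "W \<subseteq> \<Union> (component F ` W)" using in_component_self by fast
  qed
  have "3 * card (component F ` W) = card (\<Union> (component F ` W))"
  proof (rule card_partition)
    show "finite (component F ` W)" "finite (\<Union> (component F ` W))"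
      using \<open>finite W\<close> union by simp_all
    show "card c = 3" if "c \<in> component F ` W" for c
      using that W(1) lambda_factor_component(3)[OF factor G] by blast
    show "c1 \<inter> c2 = {}"
      if c: "c1 \<in> component F ` W" "c2 \<in> component F ` W" "c1 \<noteq> c2" for c1 c2
    proof -
      obtain v1 v2 where "c1 = component F v1" "c2 = component F v2" using c(1,2) by blast
      then show ?thesis using c(3) by (simp add: component_disjoint)
    qed
  qed
  then have "card W = 3 * card (component F ` W)" using union by simp
  then show ?thesis by simp
qed

lemma lambda_factor_restrict:
  assumes factor: "lambda_factor V E F" and G: "simple_graph V E"
    and W: "W \<subseteq> V" "\<And>v. v \<in> W \<Longrightarrow> component F v \<subseteq> W"
    and edges: "{e \<in> F. e \<subseteq> W} \<subseteq> E'"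
  shows "lambda_factor W E' {e \<in> F. e \<subseteq> W}"
proof (rule lambda_factorI[OF edges])
  fix v assume "v \<in> W"
  then have "v \<in> V" and sub: "component F v \<subseteq> W" using W by auto
  note comp = lambda_factor_component[OF factor G \<open>v \<in> V\<close>]
  show "\<exists>S. v \<in> S \<and> is_path3 {e \<in> F. e \<subseteq> W} S \<and> edge_closed {e \<in> F. e \<subseteq> W} S"
  proof (intro exI conjI)
    show "v \<in> component F v" by (rule in_component_self)
    show "is_path3 {e \<in> F. e \<subseteq> W} (component F v)"
      by (rule is_path3_cong[OF comp(1)]) (use sub in auto)
    show "edge_closed {e \<in> F. e \<subseteq> W} (component F v)"
      using comp(2) by (simp add: edge_closed_def)
  qed
qed

lemma lambda_factor_add_edges:
  assumes G: "simple_graph V E" and factor: "lambda_factor W E F"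
    and "F \<subseteq> Pow W" "F' \<subseteq> E" "F' \<subseteq> Pow W'" "W \<inter> W' = {}"
  shows "lambda_factor W E (F \<union> F')"
proof (rule lambda_factorI)
  have "F \<subseteq> E" using factor by (simp add: lambda_factor_def)
  then show "F \<union> F' \<subseteq> E" using \<open>F' \<subseteq> E\<close> by simp
  then have pairs: "\<exists>u w. u \<noteq> w \<and> e = {u, w}" if "e \<in> F \<union> F'" for e
    using simple_graph_edgeD[OF G] that by blast
  fix v assume "v \<in> W"
  have "component F v \<subseteq> W"
  proof (rule component_subset[OF \<open>v \<in> W\<close>])
    fix u w assume "{u, w} \<in> F"
    then show "w \<in> W" using \<open>F \<subseteq> Pow W\<close> by blast
  qed
  then have apart: "e \<inter> component F v = {}" if "e \<in> F'" for e
    using that \<open>F' \<subseteq> Pow W'\<close> \<open>W \<inter> W' = {}\<close> by blast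
  have nonempty: "e \<noteq> {}" if "e \<in> F'" for e
    using pairs that by blast
  show "\<exists>S. v \<in> S \<and> is_path3 (F \<union> F') S \<and> edge_closed (F \<union> F') S"
  proof (intro exI conjI)
    show "v \<in> component F v" by (rule in_component_self)
    show "is_path3 (F \<union> F') (component F v)"
    proof (rule is_path3_cong)
      show "is_path3 F (component F v)"
        using factor \<open>v \<in> W\<close> by (simp add: lambda_factor_def)
      show "{e \<in> F \<union> F'. e \<subseteq> component F v} = {e \<in> F. e \<subseteq> component F v}"
        using apart nonempty by (metis (no_types, lifting) Int_absorb2 Un_iff)
    qed
    have "edge_closed F (component F v)"
      using pairs by (intro edge_closed_component) blast
    then show "edge_closed (F \<union> F') (component F v)"
      using apart unfolding edge_closed_def by blast
  qed
qed

lemma lambda_factor_Un: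
  assumes G: "simple_graph V E"
    and factors: "lambda_factor W1 E F1" "lambda_factor W2 E F2"
    and "F1 \<subseteq> Pow W1" "F2 \<subseteq> Pow W2" "W1 \<inter> W2 = {}"
  shows "lambda_factor (W1 \<union> W2) E (F1 \<union> F2)"
proof -
  have "F1 \<subseteq> E" "F2 \<subseteq> E" using factors by (simp_all add: lambda_factor_def)
  have "lambda_factor W1 E (F1 \<union> F2)"
    by (rule lambda_factor_add_edges[OF G factors(1) assms(4) \<open>F2 \<subseteq> E\<close> assms(5,6)])
  moreover have "lambda_factor W2 E (F2 \<union> F1)"
    using assms(6) by (intro lambda_factor_add_edges[OF G factors(2) assms(5) \<open>F1 \<subseteq> E\<close> assms(4)]) blast
  ultimately show ?thesis unfolding lambda_factor_def by (auto simp: Un_commute)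
qed

lemma lambda_factor_path3:
  assumes "x \<noteq> y" "y \<noteq> z" "x \<noteq> z" "{x, y} \<in> E" "{y, z} \<in> E"
  shows "lambda_factor {x, y, z} E {{x, y}, {y, z}}"
proof (rule lambda_factorI)
  show "{{x, y}, {y, z}} \<subseteq> E" using assms by simp
  have path: "is_path3 {{x, y}, {y, z}} {x, y, z}"
    unfolding is_path3_def using assms by (intro exI[of _ x] exI[of _ y] exI[of _ z]) auto
  have closed: "edge_closed {{x, y}, {y, z}} {x, y, z}"
    by (simp add: edge_closed_def)
  show "\<exists>S. v \<in> S \<and> is_path3 {{x, y}, {y, z}} S \<and> edge_closed {{x, y}, {y, z}} S"
    if "v \<in> {x, y, z}" for v
    using that path closed by (intro exI[of _ "{x, y, z}"] conjI)
qed

section \<open>\<Lambda>-factors of the graph AabB\<close>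

locale graph_join =
  fixes VA VB :: "'a set" and EA EB :: "'a set set" and a1 a2 b1 b2 :: 'a
  assumes simple_A: "simple_graph VA EA" and simple_B: "simple_graph VB EB"
    and disjoint: "VA \<inter> VB = {}"
    and edge_a: "{a1, a2} \<in> EA" and edge_b: "{b1, b2} \<in> EB"
begin

abbreviation E :: "'a set set" where
  "E \<equiv> join_edges EA a1 a2 EB b1 b2"

lemma endpoints: "a1 \<noteq> a2" "a1 \<in> VA" "a2 \<in> VA" "b1 \<noteq> b2" "b1 \<in> VB" "b2 \<in> VB"
proof -
  obtain u w where "u \<noteq> w" "u \<in> VA" "w \<in> VA" "{a1, a2} = {u, w}"
    using simple_graph_edgeD[OF simple_A edge_a] by blast
  then show "a1 \<noteq> a2" "a1 \<in> VA" "a2 \<in> VA" by (auto simp: doubleton_eq_iff)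
  obtain u w where "u \<noteq> w" "u \<in> VB" "w \<in> VB" "{b1, b2} = {u, w}"
    using simple_graph_edgeD[OF simple_B edge_b] by blast
  then show "b1 \<noteq> b2" "b1 \<in> VB" "b2 \<in> VB" by (auto simp: doubleton_eq_iff)
qed

lemma edge_subset_A: "e \<in> EA \<Longrightarrow> e \<subseteq> VA"
  using simple_graph_edgeD[OF simple_A] by blast

lemma edge_subset_B: "e \<in> EB \<Longrightarrow> e \<subseteq> VB"
  using simple_graph_edgeD[OF simple_B] by blast

lemma simple_graph_join: "simple_graph (VA \<union> VB) E"
  unfolding simple_graph_def
proof (intro conjI ballI)
  show "finite (VA \<union> VB)" using simple_A simple_B by (simp add: simple_graph_def)
  fix e assume "e \<in> E"
  then consider "e \<in> EA" | "e \<in> EB" | "e = {a1, b1}" | "e = {a2, b2}"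
    unfolding join_edges_def by blast
  then show "\<exists>u w. u \<noteq> w \<and> u \<in> VA \<union> VB \<and> w \<in> VA \<union> VB \<and> e = {u, w}"
  proof cases
    case 1
    then show ?thesis using simple_graph_edgeD[OF simple_A] by blast
  next
    case 2
    then show ?thesis using simple_graph_edgeD[OF simple_B] by blast
  next
    case 3
    moreover have "a1 \<noteq> b1" using endpoints disjoint by blast
    ultimately show ?thesis using endpoints by blast
  next
    case 4
    moreover have "a2 \<noteq> b2" using endpoints disjoint by blast
    ultimately show ?thesis using endpoints by blast
  qed
qed

lemma join_edge_A: assumes "e \<in> E" "e \<subseteq> VA" shows "e \<in> EA"
proof -
  have "e \<noteq> {}" using simple_graph_edgeD[OF simple_graph_join assms(1)] by blast
  then have "e \<notin> EB" using assms(2) disjoint edge_subset_B by blast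
  moreover have "e \<noteq> {a1, b1}" "e \<noteq> {a2, b2}" using assms(2) endpoints disjoint by blast+
  ultimately show ?thesis using assms(1) unfolding join_edges_def by blast
qed

lemma join_edge_B: assumes "e \<in> E" "e \<subseteq> VB" shows "e \<in> EB - {{b1, b2}}"
proof -
  have "e \<noteq> {}" using simple_graph_edgeD[OF simple_graph_join assms(1)] by blast
  then have "e \<notin> EA" using assms(2) disjoint edge_subset_A by blast
  moreover have "e \<noteq> {a1, b1}" "e \<noteq> {a2, b2}" using assms(2) endpoints disjoint by blast+
  ultimately show ?thesis using assms(1) unfolding join_edges_def by blast
qed

lemma join_edge_between:
  assumes "{u, w} \<in> E" "u \<in> VA" "w \<notin> VA"
  shows "u = a1 \<and> w = b1 \<or> u = a2 \<and> w = b2"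
proof -
  have "{u, w} \<notin> EA" using assms(3) edge_subset_A by blast
  moreover have "{u, w} \<notin> EB" using assms(2) disjoint edge_subset_B by blast
  ultimately have "{u, w} = {a1, b1} \<or> {u, w} = {a2, b2}"
    using assms(1) unfolding join_edges_def by blast
  then show ?thesis using assms(2) endpoints disjoint by (auto simp: doubleton_eq_iff)
qed

end

locale graph_join_factor = graph_join +
  fixes F :: "'a set set"
  assumes factor: "lambda_factor (VA \<union> VB) E F"
begin

lemmas factor_component = lambda_factor_component[OF factor simple_graph_join]

lemma factor_subset_join: "F \<subseteq> E"
  using factor by (simp add: lambda_factor_def)

lemma component_subset_A:
  assumes "v \<in> VA" "a1 \<notin> component F v" "a2 \<notin> component F v"
  shows "component F v \<subseteq> VA"
proof (rule component_subset[OF assms(1)])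
  fix u w assume u: "u \<in> VA" "u \<in> component F v" and "{u, w} \<in> F"
  show "w \<in> VA"
  proof (rule ccontr)
    assume "w \<notin> VA"
    then have "u = a1 \<or> u = a2"
      using join_edge_between \<open>{u, w} \<in> F\<close> factor_subset_join u(1) by blast
    then show False using u(2) assms(2,3) by blast
  qed
qed

lemma component_subset_B:
  assumes "{a1, b1} \<notin> F" "{a2, b2} \<notin> F" "v \<in> VB"
  shows "component F v \<subseteq> VB"
proof (rule component_subset[OF assms(3)])
  fix u w assume "u \<in> VB" and uw: "{u, w} \<in> F"
  show "w \<in> VB"
  proof (rule ccontr)
    assume "w \<notin> VB"
    have wu: "{w, u} \<in> E" using uw factor_subset_join by (auto simp: insert_commute)
    moreover have "w \<in> VA"
      using simple_graph_edgeD[OF simple_graph_join wu] \<open>w \<notin> VB\<close>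
      by (auto simp: doubleton_eq_iff)
    moreover have "u \<notin> VA" using \<open>u \<in> VB\<close> disjoint by blast
    ultimately have "w = a1 \<and> u = b1 \<or> w = a2 \<and> u = b2" by (rule join_edge_between)
    then show False using uw assms(1,2) by (auto simp: insert_commute)
  qed
qed

lemma component_subset_rest:
  assumes "v \<in> VA - (component F a1 \<union> component F a2)"
  shows "component F v \<subseteq> VA - (component F a1 \<union> component F a2)"
proof -
  have "v \<in> component F v" by (rule in_component_self)
  then have "component F v \<noteq> component F a1" "component F v \<noteq> component F a2"
    using assms by auto
  then have apart: "component F v \<inter> component F a1 = {}" "component F v \<inter> component F a2 = {}"
    by (simp_all add: component_disjoint)
  then have "a1 \<notin> component F v" "a2 \<notin> component F v"
    using in_component_self[of a1 F] in_component_self[of a2 F] by blast+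
  then have "component F v \<subseteq> VA" using assms by (intro component_subset_A) auto
  with apart show ?thesis by blast
qed

lemma three_dvd_card_A_Int_components:
  assumes "3 dvd card VA"
  shows "3 dvd card (VA \<inter> (component F a1 \<union> component F a2))"
proof -
  have "3 dvd card (VA - (component F a1 \<union> component F a2))"
    using component_subset_rest
    by (intro three_dvd_card_union_of_components[OF factor simple_graph_join]) auto
  moreover have "finite VA" using simple_A by (simp add: simple_graph_def)
  ultimately show ?thesis
    using assms card_Int_Diff[of VA "component F a1 \<union> component F a2"]
    by (metis dvd_add_left_iff)
qed

lemma card_A_Int_component:
  assumes "v \<in> VA"
  shows "card (VA \<inter> component F v) \<in> {1, 2, 3}"
    and "card (VA \<inter> component F v) = 1 \<Longrightarrow> VA \<inter> component F v = {v}"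
    and "card (VA \<inter> component F v) = 3 \<Longrightarrow> component F v \<subseteq> VA"
proof -
  have v: "v \<in> VA \<inter> component F v" using assms by (simp add: in_component_self)
  have "v \<in> VA \<union> VB" using assms by blast
  then have card3: "card (component F v) = 3" by (rule factor_component(3))
  then have fin: "finite (component F v)" by (simp add: card_ge_0_finite)
  have "card (VA \<inter> component F v) \<le> 3"
    using card3 fin by (metis card_mono inf_le2)
  moreover have "card (VA \<inter> component F v) \<noteq> 0" using v fin by auto
  ultimately show "card (VA \<inter> component F v) \<in> {1, 2, 3}" by auto
  show "VA \<inter> component F v = {v}" if "card (VA \<inter> component F v) = 1"
    using that v by (metis card_1_singletonE singletonD)
  show "component F v \<subseteq> VA" if "card (VA \<inter> component F v) = 3"
    using that card3 fin card_subset_eq[of "component F v" "VA \<inter> component F v"] by auto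
qed

lemma B_factor_avoiding_b:
  assumes "component F a1 \<subseteq> VA" "component F a2 \<subseteq> VA"
  shows "\<exists>F'. lambda_factor VB EB F' \<and> {b1, b2} \<notin> F'"
proof -
  have "b1 \<notin> VA" "b2 \<notin> VA" using endpoints disjoint by blast+
  then have "{a1, b1} \<notin> F" "{a2, b2} \<notin> F"
    using assms mem_component_if_edge[of a1 b1 F] mem_component_if_edge[of a2 b2 F] by blast+
  then have components: "component F v \<subseteq> VB" if "v \<in> VB" for v
    using that by (rule component_subset_B)
  have edges: "{e \<in> F. e \<subseteq> VB} \<subseteq> EB - {{b1, b2}}"
    using join_edge_B factor_subset_join by blast
  then have "lambda_factor VB EB {e \<in> F. e \<subseteq> VB}"
    using components by (intro lambda_factor_restrict[OF factor simple_graph_join]) auto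
  moreover have "{b1, b2} \<notin> {e \<in> F. e \<subseteq> VB}" using edges by blast
  ultimately show ?thesis by blast
qed

lemma A_factor_containing_a:
  assumes A1: "VA \<inter> component F a1 = {a1}" and A2: "card (VA \<inter> component F a2) = 2"
  shows "\<exists>F'. lambda_factor VA EA F' \<and> {a1, a2} \<in> F'"
proof -
  have a2: "a2 \<in> VA \<inter> component F a2" using endpoints by (simp add: in_component_self)
  obtain p q where pq: "VA \<inter> component F a2 = {p, q}" "p \<noteq> q"
    using A2 unfolding card_2_iff by blast
  with a2 obtain x where x: "VA \<inter> component F a2 = {a2, x}" "x \<noteq> a2"
    by (metis insert_commute insertE singletonD)
  have "component F a1 \<noteq> component F a2" using A1 x endpoints(1) by auto
  then have "component F a1 \<inter> component F a2 = {}" by (rule component_disjoint)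
  then have "x \<noteq> a1" using x(1) in_component_self[of a1 F] by blast
  have "{a2, x} \<in> F"
  proof -
    have "x \<in> VA" "x \<in> component F a2" using x(1) by blast+
    moreover have "a2 \<in> VA \<union> VB" using endpoints by blast
    ultimately obtain w where w: "w \<in> component F a2" "w \<noteq> x" "{x, w} \<in> F"
      using is_path3_edge[OF factor_component(1)] by blast
    have "w \<in> VA"
    proof (rule ccontr)
      assume "w \<notin> VA"
      then have "x = a1 \<or> x = a2"
        using join_edge_between w(3) factor_subset_join \<open>x \<in> VA\<close> by blast
      then show False using \<open>x \<noteq> a1\<close> x(2) by blast
    qed
    then have "w = a2" using w(1,2) x(1) by blast
    then show ?thesis using w(3) by (simp add: insert_commute)
  qed
  \<comment> \<open>Keep F on the other components of A; replace those of a1 and a2 by the path a1 a2 x.\<close>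
  define R where "R = VA - (component F a1 \<union> component F a2)"
  have "{e \<in> F. e \<subseteq> R} \<subseteq> EA"
    using join_edge_A factor_subset_join unfolding R_def by blast
  then have "lambda_factor R EA {e \<in> F. e \<subseteq> R}"
    using component_subset_rest unfolding R_def
    by (intro lambda_factor_restrict[OF factor simple_graph_join]) auto
  moreover have "lambda_factor {a1, a2, x} EA {{a1, a2}, {a2, x}}"
  proof (rule lambda_factor_path3)
    show "{a2, x} \<in> EA"
      using \<open>{a2, x} \<in> F\<close> factor_subset_join x(1) by (intro join_edge_A) auto
  qed (use endpoints(1) x(2) \<open>x \<noteq> a1\<close> edge_a in auto)
  moreover have "R \<inter> {a1, a2, x} = {}"
    using x(1) in_component_self[of a1 F] in_component_self[of a2 F] by (auto simp: R_def)
  ultimately have "lambda_factor (R \<union> {a1, a2, x}) EA ({e \<in> F. e \<subseteq> R} \<union> {{a1, a2}, {a2, x}})"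
    by (intro lambda_factor_Un[OF simple_A]) auto
  moreover have "R \<union> {a1, a2, x} = VA" using A1 x(1) endpoints by (auto simp: R_def)
  ultimately show ?thesis by blast
qed

lemma lambda_factor_join_split:
  assumes "3 dvd card VA"
  shows "(\<exists>F'. lambda_factor VA EA F' \<and> {a1, a2} \<in> F') \<or>
         (\<exists>F'. lambda_factor VB EB F' \<and> {b1, b2} \<notin> F')"
proof -
  have "join_edges EA a2 a1 EB b2 b1 = E"
    unfolding join_edges_def by (simp add: insert_commute)
  then interpret swap: graph_join_factor VA VB EA EB a2 a1 b2 b1 F
    using simple_A simple_B disjoint edge_a edge_b factor
    by unfold_locales (simp_all add: insert_commute)
  let ?n1 = "card (VA \<inter> component F a1)" and ?n2 = "card (VA \<inter> component F a2)"
  note n1 = card_A_Int_component[OF endpoints(2)]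
  note n2 = card_A_Int_component[OF endpoints(3)]
  have dvd: "3 dvd card (VA \<inter> (component F a1 \<union> component F a2))"
    using assms by (rule three_dvd_card_A_Int_components)
  show ?thesis
  proof (cases "component F a1 = component F a2")
    case True
    then have "3 dvd ?n1" using dvd by simp
    then have "?n1 = 3" using n1(1) by auto
    then show ?thesis using B_factor_avoiding_b n1(3) True by simp
  next
    case False
    then have "(VA \<inter> component F a1) \<inter> (VA \<inter> component F a2) = {}"
      using component_disjoint[OF False] by blast
    moreover have "finite VA" using simple_A by (simp add: simple_graph_def)
    ultimately have "card (VA \<inter> (component F a1 \<union> component F a2)) = ?n1 + ?n2"
      by (simp add: Int_Un_distrib card_Un_disjoint)
    then have "3 dvd ?n1 + ?n2" using dvd by simp
    then consider "?n1 = 3" "?n2 = 3" | "?n1 = 1" "?n2 = 2" | "?n1 = 2" "?n2 = 1"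
      using n1(1) n2(1) by (auto; presburger)
    then show ?thesis
    proof cases
      case 1
      then show ?thesis using B_factor_avoiding_b n1(3) n2(3) by simp
    next
      case 2
      then show ?thesis using A_factor_containing_a n1(2) by simp
    next
      case 3
      then show ?thesis using swap.A_factor_containing_a n2(2) by (simp add: insert_commute)
    qed
  qed
qed

end

theorem mainTheorem13:
  fixes VA VB :: "'a set" and EA EB :: "'a set set" and a1 a2 b1 b2 :: 'a
  assumes "cubic VA EA" and "cubic VB EB"
    and "VA \<inter> VB = {}"
    and "card VA mod 6 = 0" and "card VB mod 6 = 0"
    and "{a1, a2} \<in> EA" and "{b1, b2} \<in> EB"
    and "\<not> (\<exists>F. lambda_factor VA EA F \<and> {a1, a2} \<in> F)"
    and "\<not> (\<exists>F. lambda_factor VB EB F \<and> {b1, b2} \<notin> F)"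
  shows "card (join_verts VA VB) mod 6 = 0 \<and>
         \<not> (\<exists>F. lambda_factor (join_verts VA VB) (join_edges EA a1 a2 EB b1 b2) F)"
proof
  have simple: "simple_graph VA EA" "simple_graph VB EB"
    using assms(1,2) by (simp_all add: cubic_def)
  interpret graph_join VA VB EA EB a1 a2 b1 b2
    using simple assms(3,6,7) by unfold_locales
  have "card (VA \<union> VB) = card VA + card VB"
    using simple assms(3) by (intro card_Un_disjoint) (simp_all add: simple_graph_def)
  then show "card (join_verts VA VB) mod 6 = 0"
    using assms(4,5) unfolding join_verts_def by presburger
  show "\<not> (\<exists>F. lambda_factor (join_verts VA VB) E F)"
  proof
    assume "\<exists>F. lambda_factor (join_verts VA VB) E F"
    then obtain F where "lambda_factor (VA \<union> VB) E F"
      unfolding join_verts_def by blast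
    then interpret graph_join_factor VA VB EA EB a1 a2 b1 b2 F
      by unfold_locales
    have "3 dvd card VA" using assms(4) by presburger
    then show False using lambda_factor_join_split assms(8,9) by blast
  qed
qed

end
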